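(* For every integer $N\ge1$, $$\phi_N(y,z)=\{(q-1)z\}^{-N(N+1)/2}q^{-(N-1)N(N+1)/6}\det\Big(p_{2(N+1-i)}\big(y,q^{N+1-j}z\big)\Big)_{i,j=1}^{N+1},$$ i.e. the $(N+1)\times(N+1)$ determinant has first row $p_{2N}(y,q^Nz),p_{2N}(y,q^{N-1}z),\dots,p_{2N}(y,z)$ and last row $p_0(y,q^Nz),\dots,p_0(y,z)$.
   Context: $q$ is a fixed nonzero complex constant that is not a root of unity; $y,z$ are variables. For $k\in\mathbb{Z}$ the polynomials $p_k(y,z)$ are defined by the generating function $\sum_{n\ge 0}p_n(y,z)t^n=\frac{(-(1-q)t;q)_\infty}{((1-q)yt;q)_\infty((1-q)zt;q)_\infty}$, with $(a;q)_\infty=\prod_{i\ge0}(1-aq^i)$, and $p_k=0$ for $k<0$; equivalently $p_n(y,z)=(1-q)^n\sum_{a+b+c=n}\frac{y^a z^b q^{c(c-1)/2}}{(q;q)_a(q;q)_b(q;q)_c}$ with $(q;q)_m=\prod_{j=1}^m(1-q^j)$. For $N>0$, $\phi_N(y,z)=\det\big(p_{N-2i+j+1}(y,z)\big)_{i,j=1}^N$. *)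

theory Defs
  imports Complex_Main "Jordan_Normal_Form.Determinant"
begin

definition qpoch :: "complex \<Rightarrow> nat \<Rightarrow> complex" where
  "qpoch q m = (\<Prod>j=1..m. 1 - q ^ j)"

definition pp :: "complex \<Rightarrow> int \<Rightarrow> complex \<Rightarrow> complex \<Rightarrow> complex" where
  "pp q k y z = (if k < 0 then 0 else
     (let n = nat k in
      (1 - q) ^ n * (\<Sum>(a, b, c) \<in> {(a, b, c). a + b + c = n}.
          y ^ a * z ^ b * q ^ (c * (c - 1) div 2) / (qpoch q a * qpoch q b * qpoch q c))))"

text \<open>phi_N(y,z) = det (p_{N-2i+j+1}(y,z))_{i,j=1..N}; 0-based indices i' = i-1, j' = j-1.\<close>
definition phi :: "complex \<Rightarrow> nat \<Rightarrow> complex \<Rightarrow> complex \<Rightarrow> complex" where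
  "phi q N y z = det (mat N N (\<lambda>(i, j). pp q (int N - 2 * int i + int j) y z))"

end

theory Submission
  imports Defs
begin

text \<open>
Replacing z by q z in the generating function multiplies it by 1 - (1 - q) z t, so
p_n(y, q z) = p_n(y, z) + (q - 1) z p_(n-1)(y, z). Iterating, p_n(y, q^k z) is the sum over m of
e_(k,m) p_(n-m)(y, z), where e_(k,m) is the coefficient of t^m in the product of 1 + (q - 1) q^i z t
over i < k. Hence the matrix on the right-hand side factors as B E, where B is the matrix of phi_N
bordered by the row (p_(m-N)(y, z))_m = (0, ..., 0, 1), so that det B = phi_N, and E is triangular
with diagonal entries e_(k,k) = ((q - 1) z)^k q^(k(k-1)/2) for k = 0, ..., N.
\<close>

lemma qpoch_Suc: "qpoch q (Suc n) = qpoch q n * (1 - q ^ Suc n)"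
  unfolding qpoch_def by simp

lemma qpoch_nonzero:
  assumes "\<forall>n::nat. n > 0 \<longrightarrow> q ^ n \<noteq> 1"
  shows "qpoch q m \<noteq> 0"
  using assms unfolding qpoch_def by (auto simp: prod_zero_iff)

lemma pp_negative: "k < 0 \<Longrightarrow> pp q k y z = 0"
  unfolding pp_def by simp

text \<open>Coefficientwise form of G(y, z, t) = G(y, 0, t) / ((1 - q) z t; q)_\<infinity>.\<close>

lemma pp_expand_in_z:
  "pp q (int n) y z = (\<Sum>b\<le>n. ((1 - q) * z) ^ b / qpoch q b * pp q (int (n - b)) y 0)"
proof -
  define T where
    "T m = (\<Sum>a\<le>m. y ^ a * q ^ ((m - a) * (m - a - 1) div 2) / (qpoch q a * qpoch q (m - a)))" for m
  have pp_T: "pp q (int m) y w = (1 - q) ^ m * (\<Sum>b\<le>m. w ^ b / qpoch q b * T (m - b))" for m w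
  proof -
    let ?f = "\<lambda>(a, b, c).
      y ^ a * w ^ b * q ^ (c * (c - 1) div 2) / (qpoch q a * qpoch q b * qpoch q c)"
    have "(\<Sum>(a, b, c) \<in> {(a, b, c). a + b + c = m}. ?f (a, b, c)) =
          (\<Sum>(b, a) \<in> (SIGMA b:{..m}. {..m - b}). ?f (a, b, m - b - a))"
      by (rule sum.reindex_bij_witness[where i = "\<lambda>(b, a). (a, b, m - b - a)"
            and j = "\<lambda>(a, b, c). (b, a)"]) auto
    also have "\<dots> = (\<Sum>b\<le>m. \<Sum>a\<le>m - b. ?f (a, b, m - b - a))"
      by (subst sum.Sigma) auto
    also have "\<dots> = (\<Sum>b\<le>m. w ^ b / qpoch q b * T (m - b))"
      unfolding T_def sum_distrib_left
      by (intro sum.cong refl) (simp add: field_simps diff_diff_add)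
    finally show ?thesis unfolding pp_def by (simp add: Let_def)
  qed
  have pp_0: "pp q (int m) y 0 = (1 - q) ^ m * T m" for m
    unfolding pp_T by (simp add: atMost_Suc_eq_insert_0 sum.atMost_shift qpoch_def)
  have "(1 - q) ^ n = (1 - q) ^ b * (1 - q) ^ (n - b)" if "b \<le> n" for b
    using that by (simp flip: power_add)
  then show ?thesis
    unfolding pp_0 pp_T[of n z] sum_distrib_left
    by (intro sum.cong refl) (simp add: power_mult_distrib)
qed

lemma pp_zero: "pp q 0 y z = 1"
proof -
  have "{(a, b, c). a + b + c = (0::nat)} = {(0, 0, 0)}" by auto
  then show ?thesis unfolding pp_def by (simp add: qpoch_def)
qed

lemma pp_q_shift:
  assumes nz: "\<And>m. qpoch q m \<noteq> 0"
  shows "pp q k y (q * w) = pp q k y w + (q - 1) * w * pp q (k - 1) y w"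
proof -
  have coeff_diff: "((1 - q) * (q * w)) ^ b / qpoch q b - ((1 - q) * w) ^ b / qpoch q b =
      (if b = 0 then 0 else (q - 1) * w * (((1 - q) * w) ^ (b - 1) / qpoch q (b - 1)))" for b
  proof (cases b)
    case (Suc c)
    have ne: "1 - q ^ Suc c \<noteq> 0" using nz[of "Suc c"] unfolding qpoch_Suc by auto
    have "((1 - q) * (q * w)) ^ b / qpoch q b - ((1 - q) * w) ^ b / qpoch q b =
        - (((1 - q) * w) ^ Suc c * (1 - q ^ Suc c)) / (qpoch q c * (1 - q ^ Suc c))"
    proof -
      have "((1 - q) * (q * w)) ^ Suc c = ((1 - q) * w) ^ Suc c * q ^ Suc c"
        by (simp only: power_mult_distrib mult_ac)
      then show ?thesis
        unfolding Suc qpoch_Suc diff_divide_distrib[symmetric] by (simp add: right_diff_distrib)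
    qed
    also have "\<dots> = - (((1 - q) * w) ^ Suc c / qpoch q c)"
      using ne by simp
    also have "\<dots> = (q - 1) * w * (((1 - q) * w) ^ c / qpoch q c)"
      by (simp add: power_Suc divide_simps algebra_simps)
    finally show ?thesis using Suc by simp
  qed simp
  have "pp q (int (Suc n)) y (q * w) - pp q (int (Suc n)) y w = (q - 1) * w * pp q (int n) y w" for n
  proof -
    have "pp q (int (Suc n)) y (q * w) - pp q (int (Suc n)) y w =
        (\<Sum>b\<le>Suc n. (((1 - q) * (q * w)) ^ b / qpoch q b - ((1 - q) * w) ^ b / qpoch q b)
           * pp q (int (Suc n - b)) y 0)"
      unfolding pp_expand_in_z[of q "Suc n" y "q * w"] pp_expand_in_z[of q "Suc n" y w]
        left_diff_distrib sum_subtractf ..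
    also have "\<dots> =
        (\<Sum>c\<le>n. (q - 1) * w * (((1 - q) * w) ^ c / qpoch q c) * pp q (int (n - c)) y 0)"
      unfolding coeff_diff by (subst sum.atMost_Suc_shift) simp
    also have "\<dots> = (q - 1) * w * pp q (int n) y w"
      unfolding pp_expand_in_z[of q n y w] sum_distrib_left by (simp add: mult.assoc)
    finally show ?thesis .
  qed
  moreover have "k < 0 \<or> k = 0 \<or> (\<exists>n. k = int (Suc n))"
    by presburger
  ultimately show ?thesis
    by (auto simp: pp_negative pp_zero algebra_simps)
qed

definition qshift_poly :: "complex \<Rightarrow> complex \<Rightarrow> nat \<Rightarrow> complex poly" where
  "qshift_poly q z k = (\<Prod>i<k. [:1, (q - 1) * q ^ i * z:])"

lemma qshift_poly_Suc:
  "qshift_poly q z (Suc k) =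
     qshift_poly q z k + smult ((q - 1) * q ^ k * z) (pCons 0 (qshift_poly q z k))"
  unfolding qshift_poly_def by (simp add: mult.commute)

lemma degree_qshift_poly: "degree (qshift_poly q z k) \<le> k"
proof -
  have "degree (qshift_poly q z k) \<le> (\<Sum>i<k. degree [:1, (q - 1) * q ^ i * z:])"
    unfolding qshift_poly_def using degree_prod_sum_le[of "{..<k}"]
    by (simp only: o_def finite_lessThan) blast
  also have "\<dots> \<le> (\<Sum>i<k. 1)"
    by (intro sum_mono) (simp del: pCons_eq_0_iff)
  finally show ?thesis by simp
qed

lemma coeff_qshift_poly_eq_0: "k < m \<Longrightarrow> coeff (qshift_poly q z k) m = 0"
  using degree_qshift_poly[of q z k] by (simp add: coeff_eq_0)

lemma coeff_qshift_poly_self: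
  "coeff (qshift_poly q z k) k = ((q - 1) * z) ^ k * q ^ (k * (k - 1) div 2)"
proof -
  have "coeff (qshift_poly q z k) k = (\<Prod>i<k. (q - 1) * q ^ i * z)"
  proof (induction k)
    case (Suc k)
    then show ?case by (simp add: qshift_poly_Suc coeff_qshift_poly_eq_0 mult.commute)
  qed (simp add: qshift_poly_def)
  also have "\<dots> = ((q - 1) * z) ^ k * q ^ (\<Sum>i<k. i)"
    by (simp add: prod.distrib power_sum mult_ac power_mult_distrib)
  also have "(\<Sum>i<k. i) = k * (k - 1) div 2"
    by (simp add: lessThan_atLeast0 Sum_Ico_nat)
  finally show ?thesis .
qed

lemma pp_qpower_shift:
  assumes nz: "\<And>m. qpoch q m \<noteq> 0" and "k \<le> K"
  shows "pp q n y (q ^ k * z) = (\<Sum>m\<le>K. coeff (qshift_poly q z k) m * pp q (n - int m) y z)"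
  using assms(2)
proof (induction k arbitrary: n K)
  case 0
  then show ?case by (simp add: qshift_poly_def sum.atMost_shift)
next
  case (Suc k)
  then obtain K' where K: "K = Suc K'" by (cases K) auto
  let ?e = "coeff (qshift_poly q z k)" and ?c = "(q - 1) * q ^ k * z"
  have "pp q n y (q ^ Suc k * z) = pp q n y (q ^ k * z) + ?c * pp q (n - 1) y (q ^ k * z)"
    using pp_q_shift[OF nz, of n y "q ^ k * z"] by (simp add: mult_ac)
  also have "pp q (n - 1) y (q ^ k * z) = (\<Sum>m\<le>K'. ?e m * pp q (n - int (Suc m)) y z)"
  proof -
    have "?e K = 0" using Suc.prems by (simp add: coeff_qshift_poly_eq_0)
    then show ?thesis
      using Suc.IH[of K "n - 1"] Suc.prems by (simp add: K algebra_simps)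
  qed
  also have "(\<Sum>m\<le>K'. ?e m * pp q (n - int (Suc m)) y z) =
      (\<Sum>m\<le>K. coeff (pCons 0 (qshift_poly q z k)) m * pp q (n - int m) y z)"
    unfolding K by (subst sum.atMost_Suc_shift) simp
  finally have "pp q n y (q ^ Suc k * z) = pp q n y (q ^ k * z)
      + ?c * (\<Sum>m\<le>K. coeff (pCons 0 (qshift_poly q z k)) m * pp q (n - int m) y z)" .
  moreover have "(\<Sum>m\<le>K. coeff (qshift_poly q z (Suc k)) m * pp q (n - int m) y z) =
      (\<Sum>m\<le>K. ?e m * pp q (n - int m) y z)
      + ?c * (\<Sum>m\<le>K. coeff (pCons 0 (qshift_poly q z k)) m * pp q (n - int m) y z)"
    by (simp add: qshift_poly_Suc ring_distribs sum.distrib sum_distrib_left mult.assoc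
        del: smult_pCons)
  ultimately show ?case
    using Suc.IH[of K n] Suc.prems by simp
qed

lemma det_last_row_unit:
  fixes A :: "'a :: comm_ring_1 mat"
  assumes A: "A \<in> carrier_mat (Suc n) (Suc n)"
    and zero: "\<And>j. j < n \<Longrightarrow> A $$ (n, j) = 0" and one: "A $$ (n, n) = 1"
  shows "det A = det (mat_delete A n n)"
proof -
  have "det A = (\<Sum>j<Suc n. A $$ (n, j) * cofactor A n j)"
    by (rule laplace_expansion_row[OF A]) simp
  also have "\<dots> = cofactor A n n"
    using zero one by simp
  finally show ?thesis by (simp add: cofactor_def)
qed

lemma phi_eq_det_bordered:
  "phi q N y z = det (mat (N + 1) (N + 1) (\<lambda>(i, j). pp q (int N - 2 * int i + int j) y z))"
proof -
  let ?B = "mat (N + 1) (N + 1) (\<lambda>(i, j). pp q (int N - 2 * int i + int j) y z)"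
  have "det ?B = det (mat_delete ?B N N)"
    by (rule det_last_row_unit) (auto simp: pp_negative pp_zero)
  also have "mat_delete ?B N N = mat N N (\<lambda>(i, j). pp q (int N - 2 * int i + int j) y z)"
    by (rule eq_matI) (auto simp: mat_delete_def)
  finally show ?thesis unfolding phi_def ..
qed

lemma sum_triangular_numbers:
  "(\<Sum>k\<le>(N::nat). k * (k - 1) div 2) = (N - 1) * N * (N + 1) div 6"
proof -
  have "6 * (\<Sum>k\<le>N. k * (k - 1) div 2) = (N - 1) * N * (N + 1)"
  proof (induction N)
    case (Suc N)
    have "even (Suc N * N)" by simp
    then have "6 * (Suc N * N div 2) = 3 * (Suc N * N)" by (elim evenE) simp
    then have "6 * (\<Sum>k\<le>Suc N. k * (k - 1) div 2) = (N - 1) * N * (N + 1) + 3 * (Suc N * N)"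
      using Suc.IH by (simp only: sum.atMost_Suc add_mult_distrib2 diff_Suc_1)
    then show ?case by (cases N) (simp_all add: algebra_simps)
  qed simp
  then show ?thesis by simp
qed

lemma det_qshift_coeff_mat:
  "det (mat (N + 1) (N + 1) (\<lambda>(m, j). coeff (qshift_poly q z (N - j)) (N - m))) =
     ((q - 1) * z) ^ (N * (N + 1) div 2) * q ^ ((N - 1) * N * (N + 1) div 6)"
  (is "det ?E = _")
proof -
  have "det ?E = (\<Prod>j<N + 1. coeff (qshift_poly q z (N - j)) (N - j))"
    by (subst det_lower_triangular[of "N + 1"])
      (auto simp: coeff_qshift_poly_eq_0 prod_list_diag_prod lessThan_atLeast0)
  also have "\<dots> = (\<Prod>k\<le>N. coeff (qshift_poly q z k) k)"
    by (rule prod.reindex_bij_witness[where i = "\<lambda>k. N - k" and j = "\<lambda>k. N - k"]) auto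
  also have "\<dots> = ((q - 1) * z) ^ (\<Sum>k\<le>N. k) * q ^ (\<Sum>k\<le>N. k * (k - 1) div 2)"
    by (simp add: coeff_qshift_poly_self prod.distrib power_sum)
  also have "(\<Sum>k\<le>N. k) = N * (N + 1) div 2"
    by (simp add: atMost_atLeast0 gauss_sum_nat)
  finally show ?thesis
    unfolding sum_triangular_numbers .
qed

lemma qshift_pp_mat_factor:
  assumes "\<And>m. qpoch q m \<noteq> 0"
  shows "mat (N + 1) (N + 1) (\<lambda>(i, j). pp q (2 * (int N - int i)) y (q ^ (N - j) * z)) =
    mat (N + 1) (N + 1) (\<lambda>(i, m). pp q (int N - 2 * int i + int m) y z) *
    mat (N + 1) (N + 1) (\<lambda>(m, j). coeff (qshift_poly q z (N - j)) (N - m))"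
    (is "?M = ?B * ?E")
proof (rule eq_matI)
  fix i j assume "i < dim_row (?B * ?E)" and "j < dim_col (?B * ?E)"
  then have i: "i \<le> N" and j: "j \<le> N" by auto
  have "(\<Sum>m\<in>{0..<N + 1}.
          pp q (int N - 2 * int i + int m) y z * coeff (qshift_poly q z (N - j)) (N - m)) =
      (\<Sum>m\<le>N. coeff (qshift_poly q z (N - j)) m * pp q (2 * (int N - int i) - int m) y z)"
    by (rule sum.reindex_bij_witness[where i = "\<lambda>m. N - m" and j = "\<lambda>m. N - m"])
      (auto simp: of_nat_diff algebra_simps)
  also have "\<dots> = pp q (2 * (int N - int i)) y (q ^ (N - j) * z)"
    by (rule pp_qpower_shift[OF assms, symmetric]) simp
  finally show "?M $$ (i, j) = (?B * ?E) $$ (i, j)"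
    using i j by (simp add: scalar_prod_def)
qed auto

theorem lemma5:
  fixes q y z :: complex and N :: nat
  assumes "q \<noteq> 0" and "\<forall>n::nat. n > 0 \<longrightarrow> q ^ n \<noteq> 1"
    and "z \<noteq> 0" and "N \<ge> 1"
  shows "phi q N y z =
     inverse (((q - 1) * z) ^ (N * (N + 1) div 2)) * inverse (q ^ ((N - 1) * N * (N + 1) div 6)) *
     det (mat (N + 1) (N + 1) (\<lambda>(i, j). pp q (2 * (int N - int i)) y (q ^ (N - j) * z)))"
proof -
  have "q - 1 \<noteq> 0" using assms(2) by force
  have "det (mat (N + 1) (N + 1) (\<lambda>(i, j). pp q (2 * (int N - int i)) y (q ^ (N - j) * z))) =
      phi q N y z * (((q - 1) * z) ^ (N * (N + 1) div 2) * q ^ ((N - 1) * N * (N + 1) div 6))"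
    unfolding qshift_pp_mat_factor[OF qpoch_nonzero[OF assms(2)]] phi_eq_det_bordered
      det_qshift_coeff_mat[symmetric]
    by (rule det_mult) auto
  with \<open>q - 1 \<noteq> 0\<close> assms(1,3) show ?thesis
    by (simp add: field_simps)
qed

end
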